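(* Let $n\ge3$, $\mathcal{O}\subset\mathbb{R}^n$ bounded open with $C^2$ boundary, and suppose (H1) holds. Then for every $\tau<T$ the operator $A(t)$ is uniformly strongly elliptic on $[\tau,T]$: there exists $C>0$ (depending on $r,\tau,T$) such that $\sum_{j,k=1}^n a_{jk}(t,y)z_jz_k\ge C\|z\|^2_{\mathbb{R}^n}$ for all $(t,y)\in[\tau,T]\times\overline{\mathcal{O}}$ and $z\in\mathbb{R}^n$.
   Context: $r\in C^1(\mathbb{R}\times\overline{\mathcal{O}},\mathbb{R}^n)$ with $r(t,\cdot):\overline{\mathcal{O}}\to r(t,\overline{\mathcal{O}})$ a $C^2$ diffeomorphism for each $t$, inverse $r^{-1}(t,\cdot)=(r^{-1}_1,\dots,r^{-1}_n)$; $a_{jk}(t,y)=\sum_{i=1}^n \frac{\partial r^{-1}_j}{\partial x_i}(t,r(t,y))\frac{\partial r^{-1}_k}{\partial x_i}(t,r(t,y))$; $A(t)v=-\sum_{j,k}\partial_{y_j}(a_{jk}(t,\cdot)\partial_{y_k}v)+\beta v$, $\beta>0$. (H1): $r^{-1}(\cdot,x)$ is $C^1$ in $t$, and there are $h\in C(\mathbb{R})$, $p_{ik}\in C^1(\mathbb{R}^n,\mathbb{R})$ with $\frac{\partial r^{-1}_k}{\partial x_i}(t,r(t,y))=h(t)p_{ik}(y)$ for all $t,y,i,k$; $h$ is Hölder continuous with exponent $\theta\in(0,1]$ and $0<h_0\le h\le h_1$. *)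

theory Defs
  imports "HOL-Analysis.Analysis"
begin

definition pderiv_dir :: "('a::euclidean_space \<Rightarrow> 'b::real_normed_vector) \<Rightarrow> 'a \<Rightarrow> 'a \<Rightarrow> 'b" where
  "pderiv_dir f b x = frechet_derivative f (at x) b"

definition C1_on :: "'a::euclidean_space set \<Rightarrow> ('a \<Rightarrow> 'b::real_normed_vector) \<Rightarrow> bool" where
  "C1_on U f \<longleftrightarrow> (\<forall>x\<in>U. f differentiable (at x)) \<and>
     (\<forall>b\<in>Basis. continuous_on U (\<lambda>x. pderiv_dir f b x))"

definition C2_on :: "'a::euclidean_space set \<Rightarrow> ('a \<Rightarrow> 'b::real_normed_vector) \<Rightarrow> bool" where
  "C2_on U f \<longleftrightarrow> C1_on U f \<and> (\<forall>b\<in>Basis. C1_on U (\<lambda>x. pderiv_dir f b x))"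

definition C1_on_set :: "'a::euclidean_space set \<Rightarrow> ('a \<Rightarrow> 'b::real_normed_vector) \<Rightarrow> bool" where
  "C1_on_set S f \<longleftrightarrow> (\<exists>U. open U \<and> S \<subseteq> U \<and> C1_on U f)"

definition C2_on_set :: "'a::euclidean_space set \<Rightarrow> ('a \<Rightarrow> 'b::real_normed_vector) \<Rightarrow> bool" where
  "C2_on_set S f \<longleftrightarrow> (\<exists>U. open U \<and> S \<subseteq> U \<and> C2_on U f)"

definition C2_boundary :: "(real^'n) set \<Rightarrow> bool" where
  "C2_boundary Om \<longleftrightarrow> (\<forall>x0\<in>frontier Om. \<exists>U \<phi>. open U \<and> x0 \<in> U \<and> C2_on U (\<phi> :: real^'n \<Rightarrow> real) \<and>
      (\<forall>x\<in>U. frechet_derivative \<phi> (at x) \<noteq> (\<lambda>v. 0)) \<and> Om \<inter> U = {x\<in>U. \<phi> x < 0})"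

definition C2_diffeo_with_inverse ::
  "(real^'n) set \<Rightarrow> (real^'n \<Rightarrow> real^'n) \<Rightarrow> (real^'n \<Rightarrow> real^'n) \<Rightarrow> bool" where
  "C2_diffeo_with_inverse S f g \<longleftrightarrow> C2_on_set S f \<and> C2_on_set (f ` S) g \<and>
     (\<forall>y\<in>S. g (f y) = y) \<and> (\<forall>x\<in>f ` S. f (g x) = x)"

definition coeff_a ::
  "(real \<Rightarrow> real^'n \<Rightarrow> real^'n) \<Rightarrow> (real \<Rightarrow> real^'n \<Rightarrow> real^'n) \<Rightarrow> real \<Rightarrow> real^'n \<Rightarrow> 'n \<Rightarrow> 'n \<Rightarrow> real" where
  "coeff_a r rinv t y j k =
     (\<Sum>i\<in>UNIV. (pderiv_dir (rinv t) (axis i 1) (r t y)) $ j * (pderiv_dir (rinv t) (axis i 1) (r t y)) $ k)"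

end

theory Submission
  imports Defs
begin

text \<open>
  Hypothesis (H1) factors the coefficient matrix as a(t,y) = h(t)^2 P(y)^T P(y) with
  P(y) = (p_ik(y)), so the quadratic form equals h(t)^2 |P(y) z|^2, which is at least
  h0^2 |P(y) z|^2. At the fixed time 0 the rows of P(y) are, up to the factor h(0), the
  images of the unit vectors under the derivative of rinv(0,.) at r(0,y). That derivative
  is onto: differentiating rinv(0, r(0,y)) = y gives a right inverse on the open set O, and
  by continuity also on its closure. Hence P(y) z = 0 forces z = 0, and compactness of
  closure O times the unit sphere turns pointwise positivity into a uniform bound.
  Only (H1), h >= h0 > 0, the boundedness of O and the diffeomorphism property at the
  single time 0 are used.
\<close>

lemma linear_eq_sum_Basis:
  fixes L :: "'a::euclidean_space \<Rightarrow> 'b::real_vector"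
  assumes "linear L"
  shows "L w = (\<Sum>b\<in>Basis. (w \<bullet> b) *\<^sub>R L b)"
proof -
  have "L w = L (\<Sum>b\<in>Basis. (w \<bullet> b) *\<^sub>R b)"
    by (simp add: euclidean_representation)
  also have "\<dots> = (\<Sum>b\<in>Basis. (w \<bullet> b) *\<^sub>R L b)"
    using assms by (simp add: linear_sum linear_scale)
  finally show ?thesis .
qed

lemma frechet_derivative_eq_sum_pderiv_dir:
  assumes "f differentiable (at x)"
  shows "frechet_derivative f (at x) v = (\<Sum>b\<in>Basis. (v \<bullet> b) *\<^sub>R pderiv_dir f b x)"
  unfolding pderiv_dir_def
  using assms unfolding frechet_derivative_works by (intro linear_eq_sum_Basis has_derivative_linear)

lemma C1_on_imp_continuous_on:
  assumes "C1_on U f"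
  shows "continuous_on U f"
  using assms unfolding C1_on_def
  by (meson continuous_at_imp_continuous_on differentiable_imp_continuous_within)

lemma C1_on_continuous_on_frechet_derivative:
  assumes "C1_on U f"
  shows "continuous_on U (\<lambda>x. frechet_derivative f (at x) v)"
proof (rule continuous_on_eq)
  show "continuous_on U (\<lambda>x. \<Sum>b\<in>Basis. (v \<bullet> b) *\<^sub>R pderiv_dir f b x)"
    using assms unfolding C1_on_def by (intro continuous_intros) auto
  show "\<And>x. x \<in> U \<Longrightarrow> (\<Sum>b\<in>Basis. (v \<bullet> b) *\<^sub>R pderiv_dir f b x) = frechet_derivative f (at x) v"
    using assms unfolding C1_on_def by (simp add: frechet_derivative_eq_sum_pderiv_dir)
qed

lemma frechet_derivative_left_inverse_on_closure:
  fixes f :: "'a::euclidean_space \<Rightarrow> 'b::euclidean_space" and g :: "'b \<Rightarrow> 'a"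
  assumes "open S" and "closure S \<subseteq> U" and f: "C1_on U f"
    and "f ` closure S \<subseteq> V" and g: "C1_on V g"
    and left_inverse: "\<And>x. x \<in> closure S \<Longrightarrow> g (f x) = x"
    and "y \<in> closure S"
  shows "frechet_derivative g (at (f y)) (frechet_derivative f (at y) v) = v"
proof -
  define F where "F x = frechet_derivative g (at (f x)) (frechet_derivative f (at x) v)" for x
  have g_diff: "g differentiable (at (f x))" if "x \<in> closure S" for x
    using that assms(4) g unfolding C1_on_def by blast
  have f_deriv: "(f has_derivative frechet_derivative f (at x)) (at x)" if "x \<in> closure S" for x
    using that assms(2) f unfolding C1_on_def frechet_derivative_works by blast
  have "continuous_on (closure S) F"
  proof (rule continuous_on_eq)
    have "continuous_on (closure S) (\<lambda>x. frechet_derivative f (at x) v)"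
      by (rule continuous_on_subset[OF C1_on_continuous_on_frechet_derivative[OF f] assms(2)])
    moreover have "continuous_on (closure S) (\<lambda>x. pderiv_dir g b (f x))" if "b \<in> Basis" for b
    proof (rule continuous_on_compose2[OF _ _ assms(4)])
      show "continuous_on V (pderiv_dir g b)"
        using g that unfolding C1_on_def by blast
      show "continuous_on (closure S) f"
        by (rule continuous_on_subset[OF C1_on_imp_continuous_on[OF f] assms(2)])
    qed
    ultimately show "continuous_on (closure S)
        (\<lambda>x. \<Sum>b\<in>Basis. (frechet_derivative f (at x) v \<bullet> b) *\<^sub>R pderiv_dir g b (f x))"
      by (intro continuous_intros) auto
    show "\<And>x. x \<in> closure S \<Longrightarrow>
        (\<Sum>b\<in>Basis. (frechet_derivative f (at x) v \<bullet> b) *\<^sub>R pderiv_dir g b (f x)) = F x"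
      by (simp add: F_def frechet_derivative_eq_sum_pderiv_dir g_diff)
  qed
  moreover have "F x = v" if x: "x \<in> S" for x
  proof -
    have x': "x \<in> closure S"
      using x closure_subset by blast
    have "(g has_derivative frechet_derivative g (at (f x))) (at (f x))"
      using g_diff[OF x'] by (simp add: frechet_derivative_works)
    from diff_chain_at[OF f_deriv[OF x'] this]
    have "((\<lambda>u. u) has_derivative frechet_derivative g (at (f x)) \<circ> frechet_derivative f (at x)) (at x)"
      by (rule has_derivative_transform_within_open[OF _ \<open>open S\<close> x])
         (use left_inverse closure_subset in auto)
    then have "frechet_derivative g (at (f x)) \<circ> frechet_derivative f (at x) = (\<lambda>u. u)"
      by (rule has_derivative_unique[OF _ has_derivative_ident])
    then show ?thesis
      unfolding F_def by (simp add: fun_eq_iff)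
  qed
  ultimately have "F y = v"
    by (rule continuous_constant_on_closure[OF _ _ \<open>y \<in> closure S\<close>])
  then show ?thesis
    unfolding F_def .
qed

lemma orthogonal_images_of_Basis_eq_0:
  fixes L :: "'a::euclidean_space \<Rightarrow> 'b::real_inner"
  assumes "linear L" and "z \<in> range L" and "\<And>b. b \<in> Basis \<Longrightarrow> L b \<bullet> z = 0"
  shows "z = 0"
proof -
  obtain w where "z = L w"
    using assms(2) by blast
  then have "z \<bullet> z = (\<Sum>b\<in>Basis. (w \<bullet> b) * (L b \<bullet> z))"
    using linear_eq_sum_Basis[OF assms(1), of w] by (simp add: inner_sum_left)
  also have "\<dots> = 0"
    using assms(3) by simp
  finally show ?thesis
    by simp
qed

lemma C2_diffeo_inverse_derivative_sum_squares_pos: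
  fixes S :: "(real^'n) set"
  assumes diffeo: "C2_diffeo_with_inverse (closure S) f g" and "open S" and y: "y \<in> closure S"
    and "z \<noteq> 0"
  shows "(\<Sum>i\<in>UNIV. (pderiv_dir g (axis i 1) (f y) \<bullet> z)\<^sup>2) > 0"
proof (rule ccontr)
  obtain U where U: "closure S \<subseteq> U" "C1_on U f"
    using diffeo unfolding C2_diffeo_with_inverse_def C2_on_set_def C2_on_def by blast
  obtain V where V: "f ` closure S \<subseteq> V" "C1_on V g"
    using diffeo unfolding C2_diffeo_with_inverse_def C2_on_set_def C2_on_def by blast
  have left_inverse: "\<And>x. x \<in> closure S \<Longrightarrow> g (f x) = x"
    using diffeo unfolding C2_diffeo_with_inverse_def by blast
  have "g differentiable (at (f y))"
    using V y unfolding C1_on_def by blast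
  then have "linear (frechet_derivative g (at (f y)))"
    unfolding frechet_derivative_works by (rule has_derivative_linear)
  moreover have "frechet_derivative g (at (f y)) (frechet_derivative f (at y) z) = z"
    by (rule frechet_derivative_left_inverse_on_closure[OF \<open>open S\<close> U V left_inverse y])
  then have "z \<in> range (frechet_derivative g (at (f y)))"
    by (metis rangeI)
  moreover assume "\<not> (\<Sum>i\<in>UNIV. (pderiv_dir g (axis i 1) (f y) \<bullet> z)\<^sup>2) > 0"
  then have "(\<Sum>i\<in>UNIV. (pderiv_dir g (axis i 1) (f y) \<bullet> z)\<^sup>2) = 0"
    by (simp add: antisym sum_nonneg)
  then have "frechet_derivative g (at (f y)) b \<bullet> z = 0" if "b \<in> Basis" for b
    using that by (auto simp: sum_nonneg_eq_0_iff Basis_vec_def pderiv_dir_def)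
  ultimately show False
    using orthogonal_images_of_Basis_eq_0 \<open>z \<noteq> 0\<close> by blast
qed

lemma quadratic_form_sum_outer_products:
  fixes v :: "'i \<Rightarrow> real^'n" and z :: "real^'n"
  shows "(\<Sum>j\<in>UNIV. \<Sum>k\<in>UNIV. (\<Sum>i\<in>I. v i $ j * v i $ k) * z $ j * z $ k)
       = (\<Sum>i\<in>I. (v i \<bullet> z)\<^sup>2)"
proof -
  have "(v i \<bullet> z)\<^sup>2 = (\<Sum>j\<in>UNIV. \<Sum>k\<in>UNIV. v i $ j * v i $ k * z $ j * z $ k)" for i
    by (simp add: inner_vec_def power2_eq_square sum_product mult_ac)
  then have "(\<Sum>i\<in>I. (v i \<bullet> z)\<^sup>2) = (\<Sum>j\<in>UNIV. \<Sum>k\<in>UNIV. \<Sum>i\<in>I. v i $ j * v i $ k * z $ j * z $ k)"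
    by (simp add: sum.swap[of _ I])
  then show ?thesis
    by (simp add: sum_distrib_right)
qed

lemma coeff_a_quadratic_form:
  "(\<Sum>j\<in>UNIV. \<Sum>k\<in>UNIV. coeff_a r rinv t y j k * z $ j * z $ k)
     = (\<Sum>i\<in>UNIV. (pderiv_dir (rinv t) (axis i 1) (r t y) \<bullet> z)\<^sup>2)"
  unfolding coeff_a_def by (rule quadratic_form_sum_outer_products)

lemma compact_uniformly_coercive:
  fixes q :: "'a::topological_space \<Rightarrow> 'b::euclidean_space \<Rightarrow> real"
  assumes "compact K"
    and cont: "continuous_on (K \<times> sphere 0 1) (\<lambda>(y, z). q y z)"
    and pos: "\<And>y z. y \<in> K \<Longrightarrow> z \<noteq> 0 \<Longrightarrow> q y z > 0"
    and homogeneous: "\<And>y c z. q y (c *\<^sub>R z) = c\<^sup>2 * q y z"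
  shows "\<exists>m>0. \<forall>y\<in>K. \<forall>z. q y z \<ge> m * (norm z)\<^sup>2"
proof -
  obtain m where "m > 0" and m: "\<And>y u. y \<in> K \<Longrightarrow> u \<in> sphere 0 1 \<Longrightarrow> m \<le> q y u"
  proof (cases "K \<times> sphere (0::'b) 1 = {}")
    case True
    have "1 \<le> q y u" if "y \<in> K" and "u \<in> sphere 0 1" for y u
      using True that by blast
    then show ?thesis
      by (rule that[OF zero_less_one])
  next
    case False
    have "compact (K \<times> sphere (0::'b) 1)"
      using \<open>compact K\<close> by (intro compact_Times compact_sphere)
    then obtain yu where yu: "yu \<in> K \<times> sphere 0 1"
      and min: "\<And>w. w \<in> K \<times> sphere 0 1 \<Longrightarrow> q (fst yu) (snd yu) \<le> q (fst w) (snd w)"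
      using continuous_attains_inf[OF _ False cont] by (auto simp: case_prod_beta)
    show ?thesis
      using yu min by (intro that[of "q (fst yu) (snd yu)"] pos) (auto simp: mem_Times_iff)
  qed
  moreover have "q y z \<ge> m * (norm z)\<^sup>2" if "y \<in> K" for y z
  proof (cases "z = 0")
    case True
    then show ?thesis
      using homogeneous[of y 0 z] by simp
  next
    case False
    then have "q y z = (norm z)\<^sup>2 * q y (z /\<^sub>R norm z)"
      using homogeneous[of y "norm z" "z /\<^sub>R norm z"] by simp
    moreover have "m \<le> q y (z /\<^sub>R norm z)"
      using m[OF that] False by simp
    ultimately show ?thesis
      using mult_right_mono[of m "q y (z /\<^sub>R norm z)" "(norm z)\<^sup>2"] by (simp add: mult.commute)
  qed
  ultimately show ?thesis
    by blast
qed

lemma sum_squares_inner_uniformly_coercive: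
  fixes P :: "'a::topological_space \<Rightarrow> 'i::finite \<Rightarrow> real^'n"
  assumes "compact K" and "\<And>i. continuous_on K (\<lambda>y. P y i)"
    and "\<And>y z. y \<in> K \<Longrightarrow> z \<noteq> 0 \<Longrightarrow> (\<Sum>i\<in>UNIV. (P y i \<bullet> z)\<^sup>2) > 0"
  shows "\<exists>m>0. \<forall>y\<in>K. \<forall>z. (\<Sum>i\<in>UNIV. (P y i \<bullet> z)\<^sup>2) \<ge> m * (norm z)\<^sup>2"
proof (rule compact_uniformly_coercive[OF \<open>compact K\<close> _ assms(3)])
  have "continuous_on (K \<times> sphere 0 1) (\<lambda>yz. P (fst yz) i)" for i
    by (rule continuous_on_compose2[OF assms(2) continuous_on_fst]) auto
  then show "continuous_on (K \<times> sphere 0 1) (\<lambda>(y, z). \<Sum>i\<in>UNIV. (P y i \<bullet> z)\<^sup>2)"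
    unfolding case_prod_beta by (intro continuous_intros) auto
  show "(\<Sum>i\<in>UNIV. (P y i \<bullet> c *\<^sub>R z)\<^sup>2) = c\<^sup>2 * (\<Sum>i\<in>UNIV. (P y i \<bullet> z)\<^sup>2)" for y c z
    by (simp add: power_mult_distrib sum_distrib_left)
qed

theorem lemma3p3:
  fixes Om :: "(real^'n) set"
    and r rinv :: "real \<Rightarrow> real^'n \<Rightarrow> real^'n"
    and h :: "real \<Rightarrow> real"
    and p :: "'n \<Rightarrow> 'n \<Rightarrow> real^'n \<Rightarrow> real"
    and \<theta> h0 h1 \<tau> T :: real
  assumes n3: "CARD('n) \<ge> 3"
    and O_bounded: "bounded Om" and O_open: "open Om" and O_bdry: "C2_boundary Om"
    and r_C1: "C1_on_set (UNIV \<times> closure Om) (\<lambda>(t, y). r t y)"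
    and r_diffeo: "\<And>t. C2_diffeo_with_inverse (closure Om) (r t) (rinv t)"
    and rinv_t_diff: "\<And>x t. x \<in> r t ` closure Om \<Longrightarrow> (\<lambda>s. rinv s x) differentiable (at t)"
    and rinv_t_cont: "\<And>x. continuous_on {t. x \<in> r t ` closure Om}
                              (\<lambda>t. vector_derivative (\<lambda>s. rinv s x) (at t))"
    and h_cont: "continuous_on UNIV h"
    and p_C1: "\<And>i k. C1_on UNIV (p i k)"
    and H1_eq: "\<And>t y i k. y \<in> closure Om \<Longrightarrow>
                   (pderiv_dir (rinv t) (axis i 1) (r t y)) $ k = h t * p i k y"
    and \<theta>_pos: "0 < \<theta>" and \<theta>_le1: "\<theta> \<le> 1"
    and h_hoelder: "\<exists>K. \<forall>s t. \<bar>h s - h t\<bar> \<le> K * \<bar>s - t\<bar> powr \<theta>"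
    and h0_pos: "0 < h0" and h_bounds: "\<And>t. h0 \<le> h t \<and> h t \<le> h1"
    and \<tau>T: "\<tau> < T"
  shows "\<exists>C>0. \<forall>t\<in>{\<tau>..T}. \<forall>y\<in>closure Om. \<forall>z :: real^'n.
           (\<Sum>j\<in>UNIV. \<Sum>k\<in>UNIV. coeff_a r rinv t y j k * z $ j * z $ k) \<ge> C * (norm z)\<^sup>2"
proof -
  define P where "P y i = (\<chi> k. p i k y)" for y i
  have rinv_deriv: "pderiv_dir (rinv t) (axis i 1) (r t y) = h t *\<^sub>R P y i"
    if "y \<in> closure Om" for t y i
    using H1_eq[OF that] by (simp add: vec_eq_iff P_def)
  have form_eq: "(\<Sum>j\<in>UNIV. \<Sum>k\<in>UNIV. coeff_a r rinv t y j k * z $ j * z $ k)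
      = (h t)\<^sup>2 * (\<Sum>i\<in>UNIV. (P y i \<bullet> z)\<^sup>2)" if "y \<in> closure Om" for t y z
    by (simp add: coeff_a_quadratic_form rinv_deriv[OF that] power_mult_distrib sum_distrib_left)
  have "compact (closure Om)"
    using O_bounded by (simp add: compact_closure)
  moreover have "continuous_on (closure Om) (\<lambda>y. P y i)" for i
    unfolding P_def
    by (intro continuous_on_vec_lambda continuous_on_subset[OF C1_on_imp_continuous_on[OF p_C1]]) simp
  moreover have "(\<Sum>i\<in>UNIV. (P y i \<bullet> z)\<^sup>2) > 0" if y: "y \<in> closure Om" and "z \<noteq> 0" for y z
  proof -
    have "(h 0)\<^sup>2 * (\<Sum>i\<in>UNIV. (P y i \<bullet> z)\<^sup>2) > 0"
      using C2_diffeo_inverse_derivative_sum_squares_pos[OF r_diffeo O_open y \<open>z \<noteq> 0\<close>]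
      by (simp add: form_eq[OF y, symmetric] coeff_a_quadratic_form)
    then show ?thesis
      by (simp add: zero_less_mult_iff)
  qed
  ultimately have "\<exists>m>0. \<forall>y\<in>closure Om. \<forall>z. (\<Sum>i\<in>UNIV. (P y i \<bullet> z)\<^sup>2) \<ge> m * (norm z)\<^sup>2"
    by (rule sum_squares_inner_uniformly_coercive)
  then obtain m where "m > 0"
    and m: "\<And>y z. y \<in> closure Om \<Longrightarrow> (\<Sum>i\<in>UNIV. (P y i \<bullet> z)\<^sup>2) \<ge> m * (norm z)\<^sup>2"
    by blast
  show ?thesis
  proof (intro exI[of _ "h0\<^sup>2 * m"] conjI ballI allI)
    fix t y z
    assume y: "y \<in> closure Om"
    have "h0\<^sup>2 * (m * (norm z)\<^sup>2) \<le> (h t)\<^sup>2 * (\<Sum>i\<in>UNIV. (P y i \<bullet> z)\<^sup>2)"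
      using h_bounds[of t] h0_pos m[OF y, of z] \<open>m > 0\<close> by (intro mult_mono power_mono) auto
    then show "h0\<^sup>2 * m * (norm z)\<^sup>2 \<le> (\<Sum>j\<in>UNIV. \<Sum>k\<in>UNIV. coeff_a r rinv t y j k * z $ j * z $ k)"
      unfolding form_eq[OF y] by (simp only: mult.assoc)
  qed (use h0_pos \<open>m > 0\<close> in simp)
qed

end
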